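(* Let $m\ge3$ and let $T_m$ be the set of permutations $\tau\in\mathcal{S}_m$ with $\tau_{m-1}=m$ and $\tau_m=m-1$. A permutation $\pi\in\mathcal{S}_n$ avoids every pattern in $T_m$ if and only if every element $(i,j)$ of its essential set $\mathcal{E}(\pi)$ has rank $\rho(i,j)\le m-3$.
   Context: A permutation $\pi\in\mathcal{S}_n$ avoids $\tau\in\mathcal{S}_k$ if there are no indices $i_1<\dots<i_k$ with $\pi_{i_1}\cdots\pi_{i_k}$ in the same relative order as $\tau_1\cdots\tau_k$. Represent $\pi$ by an $n\times n$ array, rows $i$ numbered top to bottom, columns $j$ left to right, with a dot in square $(i,\pi_i)$. The diagram $D(\pi)$ is the set of squares $(i,j)$ with $\pi_i>j$ and $\pi^{-1}(j)>i$. The essential set $\mathcal{E}(\pi)$ is the set of $(i,j)\in D(\pi)$ with $(i+1,j)\notin D(\pi)$ and $(i,j+1)\notin D(\pi)$ (squares outside the array count as not in $D(\pi)$). The rank of a square $(i,j)$ is $\rho(i,j)=\#\{k<i:\pi_k<j\}$. *)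

theory Defs
  imports "HOL-Combinatorics.Permutations"
begin

text \<open>A permutation of [n] is a function nat => nat that permutes {1..n}
  (and fixes everything else). Rows/columns are numbered 1..n.\<close>

definition contains_pattern :: "(nat \<Rightarrow> nat) \<Rightarrow> nat \<Rightarrow> (nat \<Rightarrow> nat) \<Rightarrow> nat \<Rightarrow> bool" where
  "contains_pattern \<pi> n \<tau> k \<longleftrightarrow>
     (\<exists>idx :: nat \<Rightarrow> nat. strict_mono_on {1..k} idx \<and> idx ` {1..k} \<subseteq> {1..n} \<and>
        (\<forall>a\<in>{1..k}. \<forall>b\<in>{1..k}. \<pi> (idx a) < \<pi> (idx b) \<longleftrightarrow> \<tau> a < \<tau> b))"

definition avoids :: "(nat \<Rightarrow> nat) \<Rightarrow> nat \<Rightarrow> (nat \<Rightarrow> nat) \<Rightarrow> nat \<Rightarrow> bool" where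
  "avoids \<pi> n \<tau> k \<longleftrightarrow> \<not> contains_pattern \<pi> n \<tau> k"

definition diagram :: "(nat \<Rightarrow> nat) \<Rightarrow> nat \<Rightarrow> (nat \<times> nat) set" where
  "diagram \<pi> n = {(i, j). i \<in> {1..n} \<and> j \<in> {1..n} \<and> \<pi> i > j \<and> inv \<pi> j > i}"

definition essential_set :: "(nat \<Rightarrow> nat) \<Rightarrow> nat \<Rightarrow> (nat \<times> nat) set" where
  "essential_set \<pi> n = {(i, j). (i, j) \<in> diagram \<pi> n \<and> (i + 1, j) \<notin> diagram \<pi> n
                                \<and> (i, j + 1) \<notin> diagram \<pi> n}"

definition rank :: "(nat \<Rightarrow> nat) \<Rightarrow> nat \<Rightarrow> nat \<Rightarrow> nat" where
  "rank \<pi> i j = card {k \<in> {1..<i}. \<pi> k < j}"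

definition T_set :: "nat \<Rightarrow> (nat \<Rightarrow> nat) set" where
  "T_set m = {\<tau>. \<tau> permutes {1..m} \<and> \<tau> (m - 1) = m \<and> \<tau> m = m - 1}"

end

theory Submission
  imports Defs
begin

text \<open>An occurrence of a pattern of \<open>T\<^sub>m\<close> ends in two positions \<open>p < q\<close> with
  \<open>\<pi> p > \<pi> q\<close>, so \<open>(p, \<pi> q)\<close> is a cell of the diagram, and the \<open>m - 2\<close> earlier
  entries of the occurrence lie strictly north-west of that cell, giving it rank at least
  \<open>m - 2\<close>. Conversely, \<open>m - 2\<close> dots counted by the rank of a diagram cell \<open>(i, j)\<close>,
  followed by the dots in row \<open>i\<close> and in column \<open>j\<close>, form an occurrence of a pattern
  of \<open>T\<^sub>m\<close>. Finally, the rank only grows when moving down or right inside the diagram,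
  and every such path ends at an essential cell, so essential cells carry the maximal ranks.\<close>

definition standardization :: "(nat \<Rightarrow> nat) \<Rightarrow> nat \<Rightarrow> nat \<Rightarrow> nat" where
  "standardization g k a = (if a \<in> {1..k} then card {b \<in> {1..k}. g b \<le> g a} else a)"

lemma standardization_less_iff:
  assumes "a \<in> {1..k}" "b \<in> {1..k}"
  shows "standardization g k a < standardization g k b \<longleftrightarrow> g a < g b"
proof (cases "g a < g b")
  case True
  then have "b \<in> {c \<in> {1..k}. g c \<le> g b} - {c \<in> {1..k}. g c \<le> g a}"
    using assms by auto
  moreover have "{c \<in> {1..k}. g c \<le> g a} \<subseteq> {c \<in> {1..k}. g c \<le> g b}"
    using True by auto
  ultimately have "{c \<in> {1..k}. g c \<le> g a} \<subset> {c \<in> {1..k}. g c \<le> g b}"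
    by blast
  then have "card {c \<in> {1..k}. g c \<le> g a} < card {c \<in> {1..k}. g c \<le> g b}"
    by (intro psubset_card_mono) auto
  with True assms show ?thesis
    by (simp add: standardization_def)
next
  case False
  then have "{c \<in> {1..k}. g c \<le> g b} \<subseteq> {c \<in> {1..k}. g c \<le> g a}"
    by auto
  then have "card {c \<in> {1..k}. g c \<le> g b} \<le> card {c \<in> {1..k}. g c \<le> g a}"
    by (intro card_mono) auto
  with False assms show ?thesis
    by (simp add: standardization_def)
qed

lemma standardization_permutes:
  assumes "inj_on g {1..k}"
  shows "standardization g k permutes {1..k}"
proof (rule bij_imp_permutes)
  let ?\<sigma> = "standardization g k"
  have "?\<sigma> ` {1..k} \<subseteq> {1..k}"
  proof
    fix y assume "y \<in> ?\<sigma> ` {1..k}"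
    then obtain a where a: "a \<in> {1..k}" "y = ?\<sigma> a" by auto
    then have "{b \<in> {1..k}. g b \<le> g a} \<noteq> {}" by auto
    then have "1 \<le> card {b \<in> {1..k}. g b \<le> g a}"
      by (simp add: Suc_le_eq card_gt_0_iff)
    moreover have "card {b \<in> {1..k}. g b \<le> g a} \<le> card {1..k}"
      by (intro card_mono) auto
    ultimately show "y \<in> {1..k}"
      using a by (simp add: standardization_def)
  qed
  moreover have "inj_on ?\<sigma> {1..k}"
  proof (rule inj_onI, rule ccontr)
    fix a b assume ab: "a \<in> {1..k}" "b \<in> {1..k}" "?\<sigma> a = ?\<sigma> b" "a \<noteq> b"
    then have "g a \<noteq> g b" using assms by (meson inj_onD)
    with ab show False
      using standardization_less_iff by (metis less_irrefl linorder_neq_iff)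
  qed
  ultimately show "bij_betw ?\<sigma> {1..k} {1..k}"
    by (simp add: bij_betw_def endo_inj_surj)
  show "?\<sigma> x = x" if "x \<notin> {1..k}" for x
    using that by (auto simp: standardization_def)
qed

lemma standardization_in_T_set:
  assumes m: "m \<ge> 2" and inj: "inj_on g {1..m}"
    and low: "\<And>a. a \<in> {1..m - 2} \<Longrightarrow> g a < g m" and last: "g m < g (m - 1)"
  shows "standardization g m \<in> T_set m"
proof -
  have index_cases: "b \<in> {1..m - 2} \<or> b = m - 1 \<or> b = m" if "b \<in> {1..m}" for b
    using that by auto
  have "{b \<in> {1..m}. g b \<le> g (m - 1)} = {1..m}"
    using index_cases low last by (fastforce dest: less_trans[OF _ last])
  then have "standardization g m (m - 1) = m"
    using m by (simp add: standardization_def)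
  moreover have "{b \<in> {1..m}. g b \<le> g m} = {1..m} - {m - 1}"
    using index_cases low last m by fastforce
  then have "standardization g m m = m - 1"
    using m by (simp add: standardization_def)
  ultimately show ?thesis
    using standardization_permutes[OF inj] by (simp add: T_set_def)
qed

lemma strict_mono_on_nth:
  assumes "sorted_wrt (<) ys"
  shows "strict_mono_on {1..length ys} (\<lambda>a. ys ! (a - 1))"
  using assms by (intro strict_mono_onI) (auto intro: sorted_wrt_nth_less)

lemma contains_pattern_standardization:
  fixes \<pi> :: "nat \<Rightarrow> nat"
  assumes sorted: "sorted_wrt (<) ys" and ys: "set ys \<subseteq> {1..n}"
  defines "g \<equiv> \<lambda>a. \<pi> (ys ! (a - 1))"
  shows "contains_pattern \<pi> n (standardization g (length ys)) (length ys)"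
  unfolding contains_pattern_def
proof (intro exI conjI)
  show "strict_mono_on {1..length ys} (\<lambda>a. ys ! (a - 1))"
    using sorted by (rule strict_mono_on_nth)
  show "(\<lambda>a. ys ! (a - 1)) ` {1..length ys} \<subseteq> {1..n}"
  proof (rule image_subsetI)
    fix a assume "a \<in> {1..length ys}"
    then have "ys ! (a - 1) \<in> set ys" by auto
    with ys show "ys ! (a - 1) \<in> {1..n}" by blast
  qed
  show "\<forall>a\<in>{1..length ys}. \<forall>b\<in>{1..length ys}. \<pi> (ys ! (a - 1)) < \<pi> (ys ! (b - 1)) \<longleftrightarrow>
          standardization g (length ys) a < standardization g (length ys) b"
    by (simp add: standardization_less_iff g_def)
qed

lemma rank_mono: "i \<le> i' \<Longrightarrow> j \<le> j' \<Longrightarrow> rank \<pi> i j \<le> rank \<pi> i' j'"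
  unfolding rank_def by (intro card_mono) auto

lemma ex_essential_set_rank_ge:
  assumes "(i, j) \<in> diagram \<pi> n"
  shows "\<exists>(i', j')\<in>essential_set \<pi> n. rank \<pi> i j \<le> rank \<pi> i' j'"
  using assms
proof (induction "2 * n + 2 - i - j" arbitrary: i j rule: less_induct)
  case less
  show ?case
  proof (cases "(i, j) \<in> essential_set \<pi> n")
    case True
    then show ?thesis by blast
  next
    case False
    then obtain i1 j1 where next_cell: "(i1, j1) \<in> diagram \<pi> n" "i \<le> i1" "j \<le> j1" "i + j < i1 + j1"
      using less.prems unfolding essential_set_def by (auto intro: le_SucI)
    have "\<exists>(i', j')\<in>essential_set \<pi> n. rank \<pi> i1 j1 \<le> rank \<pi> i' j'"
      using next_cell by (intro less.hyps) (auto simp: diagram_def)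
    then obtain i' j' where "(i', j') \<in> essential_set \<pi> n" "rank \<pi> i1 j1 \<le> rank \<pi> i' j'"
      by blast
    with rank_mono[OF next_cell(2,3), of \<pi>] show ?thesis
      by (intro bexI[of _ "(i', j')"]) auto
  qed
qed

lemma diagram_rank_ge_if_contains:
  assumes m: "m \<ge> 2" and \<pi>: "\<pi> permutes {1..n}"
    and \<tau>: "\<tau> \<in> T_set m" and contains: "contains_pattern \<pi> n \<tau> m"
  shows "\<exists>(i, j)\<in>diagram \<pi> n. m - 2 \<le> rank \<pi> i j"
proof -
  have \<tau>_perm: "\<tau> permutes {1..m}" and \<tau>_last: "\<tau> (m - 1) = m" "\<tau> m = m - 1"
    using \<tau> by (auto simp: T_set_def)
  obtain idx where mono: "strict_mono_on {1..m} idx" and idx: "idx ` {1..m} \<subseteq> {1..n}"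
    and order: "\<forall>a\<in>{1..m}. \<forall>b\<in>{1..m}. \<pi> (idx a) < \<pi> (idx b) \<longleftrightarrow> \<tau> a < \<tau> b"
    using contains unfolding contains_pattern_def by blast
  define p where "p = idx (m - 1)"
  define q where "q = idx m"
  have last_two: "m - 1 \<in> {1..m}" "m \<in> {1..m}" using m by auto
  have "p < q"
    using mono last_two m unfolding p_def q_def by (simp add: strict_mono_on_def)
  moreover have "\<pi> q < \<pi> p"
    using order last_two \<tau>_last m unfolding p_def q_def by auto
  moreover have "p \<in> {1..n}" "q \<in> {1..n}"
    using idx last_two unfolding p_def q_def by blast+
  moreover from this(2) have "\<pi> q \<in> {1..n}"
    using \<pi> by (simp only: permutes_in_image)
  ultimately have cell: "(p, \<pi> q) \<in> diagram \<pi> n"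
    using \<pi> by (auto simp: diagram_def permutes_in_image permutes_inverses(2))
  have north_west: "idx ` {1..m - 2} \<subseteq> {k \<in> {1..<p}. \<pi> k < \<pi> q}"
  proof
    fix x assume "x \<in> idx ` {1..m - 2}"
    then obtain a where a: "a \<in> {1..m - 2}" "x = idx a" by auto
    have a_m: "a \<in> {1..m}" "a \<noteq> m - 1" "a \<noteq> m"
      using a by auto
    then have "\<tau> a \<in> {1..m}" "\<tau> a \<noteq> \<tau> (m - 1)" "\<tau> a \<noteq> \<tau> m"
      using \<tau>_perm by (simp_all only: permutes_in_image permutes_inj inj_eq) simp_all
    then have "\<tau> a < \<tau> m" using \<tau>_last by auto
    then have "\<pi> x < \<pi> q"
      using order a last_two unfolding q_def by auto
    moreover have "x < p"
      using strict_mono_onD[OF mono, of a "m - 1"] a m unfolding p_def by auto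
    moreover have "x \<in> {1..n}" using idx a_m(1) a(2) by blast
    ultimately show "x \<in> {k \<in> {1..<p}. \<pi> k < \<pi> q}" by simp
  qed
  have "inj_on idx {1..m - 2}"
    using strict_mono_on_imp_inj_on[OF mono] by (rule inj_on_subset) auto
  then have "m - 2 = card (idx ` {1..m - 2})"
    by (simp add: card_image)
  also have "\<dots> \<le> rank \<pi> p (\<pi> q)"
    unfolding rank_def using north_west by (intro card_mono) auto
  finally show ?thesis
    using cell by blast
qed

lemma contains_T_set_if_diagram_rank_ge:
  assumes m: "m \<ge> 2" and \<pi>: "\<pi> permutes {1..n}"
    and cell: "(i, j) \<in> diagram \<pi> n" and rank: "m - 2 \<le> rank \<pi> i j"
  shows "\<exists>\<tau>\<in>T_set m. contains_pattern \<pi> n \<tau> m"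
proof -
  obtain S where S: "S \<subseteq> {k \<in> {1..<i}. \<pi> k < j}" "card S = m - 2" "finite S"
    using obtain_subset_with_card_n[OF rank[unfolded rank_def]] .
  define q where "q = inv \<pi> j"
  have ij: "i \<in> {1..n}" "j \<in> {1..n}" "j < \<pi> i" "i < q" "\<pi> q = j"
    using cell \<pi> unfolding q_def diagram_def by (auto simp: permutes_inverses(1))
  from ij(2) have q_range: "q \<in> {1..n}"
    unfolding q_def by (simp only: permutes_in_image[OF permutes_inv[OF \<pi>]])
  define xs where "xs = sorted_list_of_set S"
  have xs: "sorted_wrt (<) xs" "set xs = S" "length xs = m - 2"
    using S(2,3) unfolding xs_def by (auto simp: strict_sorted_iff)
  define ys where "ys = xs @ [i, q]"
  have ys: "sorted_wrt (<) ys" "set ys \<subseteq> {1..n}" "length ys = m"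
    using xs S(1) ij q_range m unfolding ys_def by (auto simp: sorted_wrt_append)
  have ys_last: "ys ! (m - 2) = i" "ys ! (m - 1) = q"
  proof -
    have "m - 2 = length xs" "m - 1 = Suc (length xs)"
      using xs(3) m by auto
    then show "ys ! (m - 2) = i" "ys ! (m - 1) = q"
      unfolding ys_def by (simp_all add: nth_append)
  qed
  define g where "g = (\<lambda>a. \<pi> (ys ! (a - 1)))"
  have "g = \<pi> \<circ> (\<lambda>a. ys ! (a - 1))"
    by (simp add: g_def comp_def)
  moreover have "inj_on (\<lambda>a. ys ! (a - 1)) {1..m}"
    using strict_mono_on_imp_inj_on[OF strict_mono_on_nth[OF ys(1)]] ys(3) by simp
  ultimately have "inj_on g {1..m}"
    using comp_inj_on inj_on_subset permutes_inj[OF \<pi>] by blast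
  moreover have "g a < g m" if "a \<in> {1..m - 2}" for a
  proof -
    have "ys ! (a - 1) = xs ! (a - 1)" "a - 1 < length xs"
      using that xs(3) unfolding ys_def by (auto simp: nth_append)
    then have "ys ! (a - 1) \<in> S" using xs(2) by (metis nth_mem)
    then show ?thesis using S(1) ij ys_last unfolding g_def by auto
  qed
  moreover have "g m < g (m - 1)"
  proof -
    have "m - 1 - 1 = m - 2" by simp
    then show ?thesis using ys_last ij unfolding g_def by simp
  qed
  ultimately have "standardization g m \<in> T_set m"
    by (rule standardization_in_T_set[OF m])
  moreover have "contains_pattern \<pi> n (standardization g m) m"
    using contains_pattern_standardization[OF ys(1,2)] unfolding g_def ys(3) .
  ultimately show ?thesis by blast
qed

lemma ex_essential_set_rank_ge_iff_diagram:
  "(\<exists>(i, j)\<in>essential_set \<pi> n. r \<le> rank \<pi> i j) \<longleftrightarrow> (\<exists>(i, j)\<in>diagram \<pi> n. r \<le> rank \<pi> i j)"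
proof
  assume "\<exists>(i, j)\<in>diagram \<pi> n. r \<le> rank \<pi> i j"
  then obtain i j where "(i, j) \<in> diagram \<pi> n" "r \<le> rank \<pi> i j" by blast
  moreover from this(1) obtain i' j' where
    "(i', j') \<in> essential_set \<pi> n" "rank \<pi> i j \<le> rank \<pi> i' j'"
    using ex_essential_set_rank_ge by blast
  ultimately show "\<exists>(i, j)\<in>essential_set \<pi> n. r \<le> rank \<pi> i j"
    by (intro bexI[of _ "(i', j')"]) auto
qed (auto simp: essential_set_def)

theorem theorem5p1:
  fixes m n :: nat and \<pi> :: "nat \<Rightarrow> nat"
  assumes "m \<ge> 3" and "\<pi> permutes {1..n}"
  shows "(\<forall>\<tau>\<in>T_set m. avoids \<pi> n \<tau> m) \<longleftrightarrow>
         (\<forall>(i, j)\<in>essential_set \<pi> n. rank \<pi> i j \<le> m - 3)"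
proof -
  have m: "m \<ge> 2" and rank_iff: "\<And>r. m - 2 \<le> r \<longleftrightarrow> \<not> r \<le> m - 3"
    using assms(1) by auto
  have "(\<exists>\<tau>\<in>T_set m. contains_pattern \<pi> n \<tau> m) \<longleftrightarrow>
        (\<exists>(i, j)\<in>diagram \<pi> n. m - 2 \<le> rank \<pi> i j)"
    using diagram_rank_ge_if_contains[OF m assms(2)]
      contains_T_set_if_diagram_rank_ge[OF m assms(2)] by blast
  also have "\<dots> \<longleftrightarrow> (\<exists>(i, j)\<in>essential_set \<pi> n. m - 2 \<le> rank \<pi> i j)"
    by (rule ex_essential_set_rank_ge_iff_diagram[symmetric])
  also have "\<dots> \<longleftrightarrow> \<not> (\<forall>(i, j)\<in>essential_set \<pi> n. rank \<pi> i j \<le> m - 3)"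
    by (auto simp: rank_iff)
  finally show ?thesis
    unfolding avoids_def by blast
qed

end
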